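(* Let $\Lambda$ be a left cancellative small category with no nontrivial invertible morphisms (i.e. every invertible morphism is an identity). Then the equivalence relations $\sim_1$ and $\sim_2$ on $\mathcal Z*X$ coincide; consequently $G_1(\Lambda)=G_2(\Lambda)$.
   Context: A left cancellative small category (LCSC) is a small category $\Lambda$ such that $\alpha\beta=\alpha\gamma$ implies $\beta=\gamma$. Morphisms are composed as $\alpha\beta$ when $s(\alpha)=r(\beta)$; $\Lambda^0$ is the set of objects, identified with identity morphisms; $v\Lambda=\{\alpha:r(\alpha)=v\}$; $\alpha\Lambda=\{\alpha\beta:r(\beta)=s(\alpha)\}$. For $\alpha\in\Lambda$, $\tau^\alpha:s(\alpha)\Lambda\to r(\alpha)\Lambda$, $\tau^\alpha(\beta)=\alpha\beta$, and $\sigma^\alpha:\alpha\Lambda\to s(\alpha)\Lambda$ is its inverse. A zigzag is a tuple $\zeta=(\alpha_1,\beta_1,\dots,\alpha_n,\beta_n)$ in $\Lambda$ with $r(\alpha_i)=r(\beta_i)$ for all $i$ and $s(\alpha_{i+1})=s(\beta_i)$ for $i<n$; $\mathcal Z$ is the set of zigzags, $s(\zeta)=s(\beta_n)$, $r(\zeta)=s(\alpha_1)$, $\mathcal Zv=\{\zeta:s(\zeta)=v\}$, $\overline\zeta=(\beta_n,\alpha_n,\dots,\beta_1,\alpha_1)$, and composable zigzags are concatenated as tuples. The zigzag map is the partial injective map $\varphi_\zeta=\sigma^{\alpha_1}\circ\tau^{\beta_1}\circ\cdots\circ\sigma^{\alpha_n}\circ\tau^{\beta_n}$ with domain $A(\zeta)\subseteq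 s(\zeta)\Lambda$ and range $A(\overline\zeta)$. For $v\in\Lambda^0$, $\mathcal D^{(0)}_v$ is the set of nonempty sets $A(\zeta)$, $\zeta\in\mathcal Zv$, and $\mathcal A_v$ is the ring of subsets of $v\Lambda$ generated by $\mathcal D^{(0)}_v$. $X_v$ is the set of ultrafilters in the ring $\mathcal A_v$ (a filter: nonempty family of nonempty members of $\mathcal A_v$ closed under intersections and supersets in $\mathcal A_v$; ultrafilter: maximal filter), with $\mathcal U_x$ denoting the ultrafilter $x$, topologized by the compact open basic sets $\widehat E=\{x\in X_v:E\in\mathcal U_x\}$, $E\in\mathcal A_v$; $X=\bigsqcup_vX_v$ and $r(x)=v$ for $x\in X_v$. For $\zeta\in\mathcal Z$ and $x\in\widehat{A(\zeta)}$, $\{\varphi_\zeta(E\cap A(\zeta)):E\in\mathcal U_x\}$ is a base for a unique ultrafilter of $\mathcal A_{r(\zeta)}$, denoted $\Phi_\zeta(x)$; $\Phi_\zeta:\widehat{A(\zeta)}\to\widehat{A(\overline\zeta)}$ is a homeomorphism. Let $\mathcal Z*X=\{(\zeta,x):s(\zeta)=r(x),\ x\in\widehat{A(\zeta)}\}$. Define $(\zeta,x)\sim_1(\zeta',x')$ iff $x=x'$ and $\Phi_\zeta|_{\widehat E}=\Phi_{\zeta'}|_{\widehat E}$ for some $E\in\mathcal U_x$; and $(\zeta,x)\sim_2(\zeta',x')$ iff $x=x'$ and $\varphi_\zeta|_E=\varphi_{\zeta'}|_E$ for some $E\in\mathcal U_x$. $G_i(\Lambda)=(\mathcal Z*X)/\sim_i$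 ($i=1,2$), with product $[\zeta,\Phi_{\zeta'}(x)][\zeta',x]=[\zeta\zeta',x]$ and inverse $[\zeta,x]^{-1}=[\overline\zeta,\Phi_\zeta(x)]$. *)

theory Defs
  imports Main
begin

text \<open>A small category whose objects are identified with identity morphisms.\<close>
record 'a cat =
  Mor :: "'a set"
  Src :: "'a \<Rightarrow> 'a"
  Rng :: "'a \<Rightarrow> 'a"
  Cmp :: "'a \<Rightarrow> 'a \<Rightarrow> 'a"

definition Obj :: "('a, 'b) cat_scheme \<Rightarrow> 'a set" where
  "Obj C = {a \<in> Mor C. Src C a = a}"

definition small_category :: "('a, 'b) cat_scheme \<Rightarrow> bool" where
  "small_category C \<longleftrightarrow>
     (\<forall>a\<in>Mor C. Src C a \<in> Mor C \<and> Rng C a \<in> Mor C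
        \<and> Src C (Src C a) = Src C a \<and> Rng C (Src C a) = Src C a
        \<and> Src C (Rng C a) = Rng C a \<and> Rng C (Rng C a) = Rng C a
        \<and> Cmp C (Rng C a) a = a \<and> Cmp C a (Src C a) = a)
   \<and> (\<forall>a\<in>Mor C. \<forall>b\<in>Mor C. Src C a = Rng C b \<longrightarrow>
        Cmp C a b \<in> Mor C \<and> Src C (Cmp C a b) = Src C b \<and> Rng C (Cmp C a b) = Rng C a)
   \<and> (\<forall>a\<in>Mor C. \<forall>b\<in>Mor C. \<forall>c\<in>Mor C. Src C a = Rng C b \<longrightarrow> Src C b = Rng C c \<longrightarrow>
        Cmp C (Cmp C a b) c = Cmp C a (Cmp C b c))"

definition left_cancellative :: "('a, 'b) cat_scheme \<Rightarrow> bool" where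
  "left_cancellative C \<longleftrightarrow>
     (\<forall>a\<in>Mor C. \<forall>b\<in>Mor C. \<forall>c\<in>Mor C. Src C a = Rng C b \<longrightarrow> Src C a = Rng C c \<longrightarrow>
        Cmp C a b = Cmp C a c \<longrightarrow> b = c)"

definition LCSC :: "('a, 'b) cat_scheme \<Rightarrow> bool" where
  "LCSC C \<longleftrightarrow> small_category C \<and> left_cancellative C"

definition invertible_mor :: "('a, 'b) cat_scheme \<Rightarrow> 'a \<Rightarrow> bool" where
  "invertible_mor C a \<longleftrightarrow> a \<in> Mor C \<and>
     (\<exists>b\<in>Mor C. Src C a = Rng C b \<and> Src C b = Rng C a
        \<and> Cmp C a b = Rng C a \<and> Cmp C b a = Src C a)"

definition no_nontrivial_invertibles :: "('a, 'b) cat_scheme \<Rightarrow> bool" where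
  "no_nontrivial_invertibles C \<longleftrightarrow> (\<forall>a. invertible_mor C a \<longrightarrow> a \<in> Obj C)"

definition tau :: "('a, 'b) cat_scheme \<Rightarrow> 'a \<Rightarrow> 'a \<Rightarrow> 'a option" where
  "tau C b g = (if g \<in> Mor C \<and> Rng C g = Src C b then Some (Cmp C b g) else None)"

definition sigma :: "('a, 'b) cat_scheme \<Rightarrow> 'a \<Rightarrow> 'a \<Rightarrow> 'a option" where
  "sigma C a d = (if \<exists>g\<in>Mor C. Rng C g = Src C a \<and> Cmp C a g = d
                  then Some (THE g. g \<in> Mor C \<and> Rng C g = Src C a \<and> Cmp C a g = d) else None)"

text \<open>A zigzag (\<alpha>1,\<beta>1,...,\<alpha>n,\<beta>n), n \<ge> 1, is the list of pairs [(\<alpha>1,\<beta>1),...,(\<alpha>n,\<beta>n)].\<close>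
definition is_zigzag :: "('a, 'b) cat_scheme \<Rightarrow> ('a \<times> 'a) list \<Rightarrow> bool" where
  "is_zigzag C z \<longleftrightarrow> z \<noteq> []
     \<and> (\<forall>(a, b)\<in>set z. a \<in> Mor C \<and> b \<in> Mor C \<and> Rng C a = Rng C b)
     \<and> (\<forall>i. Suc i < length z \<longrightarrow> Src C (fst (z ! Suc i)) = Src C (snd (z ! i)))"

definition zsrc :: "('a, 'b) cat_scheme \<Rightarrow> ('a \<times> 'a) list \<Rightarrow> 'a" where
  "zsrc C z = Src C (snd (last z))"

definition zrng :: "('a, 'b) cat_scheme \<Rightarrow> ('a \<times> 'a) list \<Rightarrow> 'a" where
  "zrng C z = Src C (fst (hd z))"

definition zrev :: "('a \<times> 'a) list \<Rightarrow> ('a \<times> 'a) list" where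
  "zrev z = rev (map (\<lambda>(a, b). (b, a)) z)"

text \<open>The zigzag map \<phi>_\<zeta> = \<sigma>^\<alpha>1 \<circ> \<tau>^\<beta>1 \<circ> ... \<circ> \<sigma>^\<alpha>n \<circ> \<tau>^\<beta>n as a partial map.\<close>
fun zmap :: "('a, 'b) cat_scheme \<Rightarrow> ('a \<times> 'a) list \<Rightarrow> 'a \<Rightarrow> 'a option" where
  "zmap C [] g = Some g"
| "zmap C ((a, b) # z) g = Option.bind (zmap C z g) (\<lambda>h. Option.bind (tau C b h) (sigma C a))"

definition Adom :: "('a, 'b) cat_scheme \<Rightarrow> ('a \<times> 'a) list \<Rightarrow> 'a set" where
  "Adom C z = {g. zmap C z g \<noteq> None}"

definition zimage :: "('a, 'b) cat_scheme \<Rightarrow> ('a \<times> 'a) list \<Rightarrow> 'a set \<Rightarrow> 'a set" where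
  "zimage C z E = {h. \<exists>g\<in>E. zmap C z g = Some h}"

inductive_set gen_ring :: "'a set set \<Rightarrow> 'a set set" for F where
  gr_empty: "{} \<in> gen_ring F"
| gr_base: "A \<in> F \<Longrightarrow> A \<in> gen_ring F"
| gr_union: "A \<in> gen_ring F \<Longrightarrow> B \<in> gen_ring F \<Longrightarrow> A \<union> B \<in> gen_ring F"
| gr_diff: "A \<in> gen_ring F \<Longrightarrow> B \<in> gen_ring F \<Longrightarrow> A - B \<in> gen_ring F"

definition D0 :: "('a, 'b) cat_scheme \<Rightarrow> 'a \<Rightarrow> 'a set set" where
  "D0 C v = {Adom C z | z. is_zigzag C z \<and> zsrc C z = v \<and> Adom C z \<noteq> {}}"

definition Aring :: "('a, 'b) cat_scheme \<Rightarrow> 'a \<Rightarrow> 'a set set" where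
  "Aring C v = gen_ring (D0 C v)"

definition is_filter_in :: "'a set set \<Rightarrow> 'a set set \<Rightarrow> bool" where
  "is_filter_in R U \<longleftrightarrow> U \<noteq> {} \<and> U \<subseteq> R \<and> {} \<notin> U
     \<and> (\<forall>E\<in>U. \<forall>F\<in>U. E \<inter> F \<in> U)
     \<and> (\<forall>E\<in>U. \<forall>F\<in>R. E \<subseteq> F \<longrightarrow> F \<in> U)"

definition is_ultrafilter_in :: "'a set set \<Rightarrow> 'a set set \<Rightarrow> bool" where
  "is_ultrafilter_in R U \<longleftrightarrow> is_filter_in R U
     \<and> (\<forall>U'. is_filter_in R U' \<longrightarrow> U \<subseteq> U' \<longrightarrow> U' = U)"

text \<open>X = disjoint union of X_v; a point is a pair (v, U_x).\<close>
definition Xsp :: "('a, 'b) cat_scheme \<Rightarrow> ('a \<times> 'a set set) set" where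
  "Xsp C = {(v, U). v \<in> Obj C \<and> is_ultrafilter_in (Aring C v) U}"

definition hatE :: "('a, 'b) cat_scheme \<Rightarrow> 'a \<Rightarrow> 'a set \<Rightarrow> ('a \<times> 'a set set) set" where
  "hatE C v E = {(w, U) \<in> Xsp C. w = v \<and> E \<in> U}"

definition Phi :: "('a, 'b) cat_scheme \<Rightarrow> ('a \<times> 'a) list \<Rightarrow> ('a \<times> 'a set set)
                   \<Rightarrow> ('a \<times> 'a set set) option" where
  "Phi C z x = (if x \<in> hatE C (zsrc C z) (Adom C z)
      then Some (zrng C z, {F \<in> Aring C (zrng C z).
                   \<exists>E\<in>snd x. zimage C z (E \<inter> Adom C z) \<subseteq> F})
      else None)"

definition ZX :: "('a, 'b) cat_scheme \<Rightarrow> (('a \<times> 'a) list \<times> ('a \<times> 'a set set)) set" where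
  "ZX C = {(z, x). is_zigzag C z \<and> x \<in> Xsp C \<and> zsrc C z = fst x \<and> Adom C z \<in> snd x}"

definition sim1 :: "('a, 'b) cat_scheme \<Rightarrow> (('a \<times> 'a) list \<times> ('a \<times> 'a set set))
                    \<Rightarrow> (('a \<times> 'a) list \<times> ('a \<times> 'a set set)) \<Rightarrow> bool" where
  "sim1 C p q \<longleftrightarrow> snd p = snd q \<and>
     (\<exists>E\<in>snd (snd p). \<forall>y\<in>hatE C (fst (snd p)) E. Phi C (fst p) y = Phi C (fst q) y)"

definition sim2 :: "('a, 'b) cat_scheme \<Rightarrow> (('a \<times> 'a) list \<times> ('a \<times> 'a set set))
                    \<Rightarrow> (('a \<times> 'a) list \<times> ('a \<times> 'a set set)) \<Rightarrow> bool" where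
  "sim2 C p q \<longleftrightarrow> snd p = snd q \<and>
     (\<exists>E\<in>snd (snd p). \<forall>g\<in>E. zmap C (fst p) g = zmap C (fst q) g)"

definition rel_on :: "'c set \<Rightarrow> ('c \<Rightarrow> 'c \<Rightarrow> bool) \<Rightarrow> ('c \<times> 'c) set" where
  "rel_on S R = {(p, q). p \<in> S \<and> q \<in> S \<and> R p q}"

definition G1 :: "('a, 'b) cat_scheme \<Rightarrow> (('a \<times> 'a) list \<times> ('a \<times> 'a set set)) set set" where
  "G1 C = ZX C // rel_on (ZX C) (sim1 C)"

definition G2 :: "('a, 'b) cat_scheme \<Rightarrow> (('a \<times> 'a) list \<times> ('a \<times> 'a set set)) set set" where
  "G2 C = ZX C // rel_on (ZX C) (sim2 C)"

end

theory Submission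
  imports Defs
begin

text \<open>
  Zigzag maps commute with right multiplication: \<open>\<phi>\<^sub>\<zeta>(gk) = \<phi>\<^sub>\<zeta>(g)k\<close>. Hence, for the
  principal ultrafilter of a point \<open>g\<close>, the filter \<open>\<Phi>\<^sub>\<zeta>\<close> of it contains the right ideal
  \<open>\<phi>\<^sub>\<zeta>(g)\<Lambda>\<close>, and each of its members contains \<open>\<phi>\<^sub>\<zeta>(g)\<close>. So if \<open>\<Phi>\<^sub>\<zeta>\<close> and \<open>\<Phi>\<^sub>\<eta>\<close>
  agree near \<open>x\<close>, then for every \<open>g\<close> in a set of \<open>\<U>\<^sub>x\<close> the morphisms \<open>\<phi>\<^sub>\<zeta>(g)\<close> and \<open>\<phi>\<^sub>\<eta>(g)\<close>
  lie in each other's right ideals. By left cancellation they then differ by an invertible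
  morphism, which has to be an identity; thus \<open>\<sim>\<^sub>1\<close> implies \<open>\<sim>\<^sub>2\<close>.
  Conversely, if \<open>\<phi>\<^sub>\<zeta>\<close> and \<open>\<phi>\<^sub>\<eta>\<close> agree on \<open>E \<in> \<U>\<^sub>x\<close>, then the image filters defining
  \<open>\<Phi>\<^sub>\<zeta>\<close> and \<open>\<Phi>\<^sub>\<eta>\<close> coincide on every ultrafilter containing \<open>E\<close>, since every image set
  can be shrunk to an image of a subset of \<open>E\<close>.
\<close>

lemma gen_ring_Int: "A \<in> gen_ring F \<Longrightarrow> B \<in> gen_ring F \<Longrightarrow> A \<inter> B \<in> gen_ring F"
  using gr_diff[of A F "A - B"] gr_diff[of A F B] by (simp add: Diff_Diff_Int)

lemma is_filter_inD:
  assumes "is_filter_in R U"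
  shows "U \<subseteq> R" and "{} \<notin> U"
    and "A \<in> U \<Longrightarrow> B \<in> U \<Longrightarrow> A \<inter> B \<in> U"
    and "A \<in> U \<Longrightarrow> B \<in> R \<Longrightarrow> A \<subseteq> B \<Longrightarrow> B \<in> U"
  using assms unfolding is_filter_in_def by auto

lemma principal_ultrafilter:
  assumes E: "E \<in> gen_ring F" "g \<in> E"
  shows "is_ultrafilter_in (gen_ring F) {A \<in> gen_ring F. g \<in> A}"
proof -
  let ?U = "{A \<in> gen_ring F. g \<in> A}"
  have filter: "is_filter_in (gen_ring F) ?U"
    using E gen_ring_Int unfolding is_filter_in_def by blast
  have "V \<subseteq> ?U" if V: "is_filter_in (gen_ring F) V" "?U \<subseteq> V" for V
  proof
    fix A assume A: "A \<in> V"
    then have A_ring: "A \<in> gen_ring F" using is_filter_inD(1)[OF V(1)] by blast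
    show "A \<in> ?U"
    proof (rule ccontr)
      assume "A \<notin> ?U"
      then have "E - A \<in> V" using A_ring E V(2) gr_diff[OF E(1) A_ring] by blast
      then have "(E - A) \<inter> A \<in> V" using A is_filter_inD(3)[OF V(1)] by blast
      moreover have "(E - A) \<inter> A = {}" by blast
      ultimately show False using is_filter_inD(2)[OF V(1)] by simp
    qed
  qed
  then show ?thesis using filter unfolding is_ultrafilter_in_def by blast
qed

definition right_ideal :: "('a, 'b) cat_scheme \<Rightarrow> 'a \<Rightarrow> 'a set" where
  "right_ideal C h = {Cmp C h k | k. k \<in> Mor C \<and> Rng C k = Src C h}"

definition principal_filter :: "('a, 'b) cat_scheme \<Rightarrow> 'a \<Rightarrow> 'a \<Rightarrow> 'a set set" where
  "principal_filter C v g = {A \<in> Aring C v. g \<in> A}"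

definition image_filter :: "('a, 'b) cat_scheme \<Rightarrow> ('a \<times> 'a) list \<Rightarrow> 'a set set \<Rightarrow> 'a set set" where
  "image_filter C z U = {F \<in> Aring C (zrng C z). \<exists>E\<in>U. zimage C z E \<subseteq> F}"

lemma zimage_Int_Adom [simp]: "zimage C z (E \<inter> Adom C z) = zimage C z E"
  unfolding zimage_def Adom_def by auto

lemma Phi_eq_Some:
  "x \<in> hatE C (zsrc C z) (Adom C z) \<Longrightarrow> Phi C z x = Some (zrng C z, image_filter C z (snd x))"
  unfolding Phi_def image_filter_def by simp

lemma principal_filter_in_hatE:
  assumes "v \<in> Obj C" "E \<in> Aring C v" "g \<in> E"
  shows "(v, principal_filter C v g) \<in> hatE C v E"
  using assms principal_ultrafilter[of E "D0 C v" g]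
  unfolding hatE_def Xsp_def principal_filter_def Aring_def by simp

lemma zmap_Cons_eq_Some:
  "zmap C ((a, b) # z) g = Some h \<longleftrightarrow>
    (\<exists>h'. zmap C z g = Some h' \<and> h' \<in> Mor C \<and> Rng C h' = Src C b \<and> sigma C a (Cmp C b h') = Some h)"
  by (auto simp: tau_def split: Option.bind_splits)

lemma zigzag_Mor: "is_zigzag C z \<Longrightarrow> set z \<subseteq> Mor C \<times> Mor C"
  unfolding is_zigzag_def by auto

lemma Adom_in_Aring:
  "is_zigzag C z \<Longrightarrow> Adom C z \<noteq> {} \<Longrightarrow> Adom C z \<in> Aring C (zsrc C z)"
  unfolding Aring_def D0_def by (blast intro: gr_base)

lemma principal_filter_in_hatE_Adom:
  assumes z: "is_zigzag C z" and v: "zsrc C z = v" "v \<in> Obj C" and g: "g \<in> Adom C z"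
  shows "(v, principal_filter C v g) \<in> hatE C (zsrc C z) (Adom C z)"
  using principal_filter_in_hatE[OF v(2) _ g] Adom_in_Aring[OF z] g v(1) by blast

lemma image_filter_cong:
  assumes U: "is_filter_in R U" "E \<in> U"
    and eq: "\<forall>g\<in>E. zmap C z g = zmap C z' g" and rng: "zrng C z = zrng C z'"
  shows "image_filter C z U = image_filter C z' U"
proof -
  have "image_filter C z1 U \<subseteq> image_filter C z2 U"
    if eq12: "\<forall>g\<in>E. zmap C z1 g = zmap C z2 g" and rng12: "zrng C z1 = zrng C z2" for z1 z2
  proof
    fix F assume "F \<in> image_filter C z1 U"
    then obtain E' where F: "F \<in> Aring C (zrng C z2)" "E' \<in> U" "zimage C z1 E' \<subseteq> F"
      using rng12 unfolding image_filter_def by auto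
    have "zimage C z2 (E' \<inter> E) = zimage C z1 (E' \<inter> E)"
      using eq12 unfolding zimage_def by force
    also have "\<dots> \<subseteq> F" using F(3) unfolding zimage_def by blast
    finally show "F \<in> image_filter C z2 U"
      using F(1) is_filter_inD(3)[OF U(1) F(2) U(2)] unfolding image_filter_def by blast
  qed
  then show ?thesis using eq rng by (metis subset_antisym)
qed

lemma ZX_D:
  assumes "(z, (v, U)) \<in> ZX C"
  shows "is_zigzag C z" "v \<in> Obj C" "is_filter_in (Aring C v) U" "zsrc C z = v" "Adom C z \<in> U"
  using assms unfolding ZX_def Xsp_def is_ultrafilter_in_def by auto

locale lc_category =
  fixes C :: "('a, 'b) cat_scheme"
  assumes small_category: "small_category C"
    and left_cancellative: "left_cancellative C"
begin

lemma
  assumes "a \<in> Mor C"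
  shows Src_in_Mor: "Src C a \<in> Mor C"
    and Rng_in_Mor: "Rng C a \<in> Mor C"
    and Rng_Rng: "Rng C (Rng C a) = Rng C a"
    and Rng_Src: "Rng C (Src C a) = Src C a"
    and Src_Rng: "Src C (Rng C a) = Rng C a"
    and Cmp_Rng_left: "Cmp C (Rng C a) a = a"
    and Cmp_Src_right: "Cmp C a (Src C a) = a"
  using small_category assms unfolding small_category_def by blast+

lemma
  assumes "a \<in> Mor C" "b \<in> Mor C" "Src C a = Rng C b"
  shows Cmp_in_Mor: "Cmp C a b \<in> Mor C"
    and Src_Cmp: "Src C (Cmp C a b) = Src C b"
    and Rng_Cmp: "Rng C (Cmp C a b) = Rng C a"
  using small_category assms unfolding small_category_def by blast+

lemma Cmp_assoc:
  "\<lbrakk>a \<in> Mor C; b \<in> Mor C; c \<in> Mor C; Src C a = Rng C b; Src C b = Rng C c\<rbrakk>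
    \<Longrightarrow> Cmp C (Cmp C a b) c = Cmp C a (Cmp C b c)"
  using small_category unfolding small_category_def by blast

lemma Cmp_cancel_left:
  "\<lbrakk>a \<in> Mor C; b \<in> Mor C; c \<in> Mor C; Src C a = Rng C b; Src C a = Rng C c;
    Cmp C a b = Cmp C a c\<rbrakk> \<Longrightarrow> b = c"
  using left_cancellative unfolding left_cancellative_def by blast

lemma sigma_Cmp:
  assumes "a \<in> Mor C" "h \<in> Mor C" "Rng C h = Src C a"
  shows "sigma C a (Cmp C a h) = Some h"
proof -
  have "(THE g. g \<in> Mor C \<and> Rng C g = Src C a \<and> Cmp C a g = Cmp C a h) = h"
    using assms Cmp_cancel_left[OF assms(1)] by (intro the_equality) auto
  then show ?thesis using assms unfolding sigma_def by auto
qed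

lemma sigma_SomeD:
  assumes "a \<in> Mor C" "sigma C a d = Some h"
  shows "h \<in> Mor C" "Rng C h = Src C a" "Cmp C a h = d"
proof -
  obtain g where g: "g \<in> Mor C" "Rng C g = Src C a" "Cmp C a g = d"
    using assms(2) unfolding sigma_def by (auto split: if_splits)
  then have "h = g" using sigma_Cmp[OF assms(1) g(1,2)] assms(2) by simp
  then show "h \<in> Mor C" "Rng C h = Src C a" "Cmp C a h = d" using g by simp_all
qed

lemma zmap_step:
  assumes "a \<in> Mor C" "b \<in> Mor C" "h' \<in> Mor C" "Rng C h' = Src C b"
    and "sigma C a (Cmp C b h') = Some h"
  shows "h \<in> Mor C" "Rng C h = Src C a" "Src C h = Src C h'"
  using sigma_SomeD[OF assms(1,5)] Src_Cmp[OF assms(1)] Src_Cmp[OF assms(2,3)] assms(4)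
  by metis+

lemma zmap_SomeD:
  assumes "set z \<subseteq> Mor C \<times> Mor C" "z \<noteq> []" "zmap C z g = Some h"
  shows "g \<in> Mor C \<and> h \<in> Mor C \<and> Src C h = Src C g
    \<and> Rng C h = Src C (fst (hd z)) \<and> Rng C g = Src C (snd (last z))"
  using assms
proof (induction z arbitrary: h)
  case Nil
  then show ?case by simp
next
  case (Cons p z)
  obtain a b where p: "p = (a, b)" by force
  obtain h' where h': "zmap C z g = Some h'" "h' \<in> Mor C" "Rng C h' = Src C b"
      "sigma C a (Cmp C b h') = Some h"
    using Cons.prems(3) unfolding p zmap_Cons_eq_Some by blast
  have ab: "a \<in> Mor C" "b \<in> Mor C" using Cons.prems(1) p by auto
  note step = zmap_step[OF ab h'(2,3,4)]
  show ?case
  proof (cases "z = []")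
    case True
    then show ?thesis using h' step p by simp
  next
    case False
    then show ?thesis using Cons.IH[OF _ False h'(1)] Cons.prems(1) step p by simp
  qed
qed

lemma zmap_Src:
  assumes "set z \<subseteq> Mor C \<times> Mor C" "zmap C z g = Some h"
  shows "Src C h = Src C g"
  using assms zmap_SomeD[OF assms(1) _ assms(2)] by (cases "z = []") auto

lemma zigzag_zmap_SomeD:
  assumes "is_zigzag C z" "zmap C z g = Some h"
  shows "g \<in> Mor C" "h \<in> Mor C" "Rng C h = zrng C z" "Rng C g = zsrc C z"
  using zmap_SomeD[OF zigzag_Mor[OF assms(1)] _ assms(2)] assms(1)
  unfolding is_zigzag_def zrng_def zsrc_def by auto

lemma zmap_Cmp_right:
  assumes "set z \<subseteq> Mor C \<times> Mor C" "zmap C z g = Some h" "k \<in> Mor C" "Rng C k = Src C g"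
  shows "zmap C z (Cmp C g k) = Some (Cmp C h k)"
  using assms(1,2)
proof (induction z arbitrary: h)
  case Nil
  then show ?case by simp
next
  case (Cons p z)
  obtain a b where p: "p = (a, b)" by force
  obtain h' where h': "zmap C z g = Some h'" "h' \<in> Mor C" "Rng C h' = Src C b"
      "sigma C a (Cmp C b h') = Some h"
    using Cons.prems(2) unfolding p zmap_Cons_eq_Some by blast
  have ab: "a \<in> Mor C" "b \<in> Mor C" using Cons.prems(1) p by auto
  note step = zmap_step[OF ab h'(2,3,4)]
  have Src_h': "Src C h' = Rng C k" using zmap_Src[OF _ h'(1)] Cons.prems(1) assms(4) by simp
  have Src_h: "Src C h = Rng C k" using step(3) Src_h' by simp
  have "Cmp C b (Cmp C h' k) = Cmp C (Cmp C b h') k"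
    using Cmp_assoc[OF ab(2) h'(2) assms(3)] h'(3) Src_h' by simp
  also have "\<dots> = Cmp C a (Cmp C h k)"
    using sigma_SomeD(3)[OF ab(1) h'(4)] Cmp_assoc[OF ab(1) step(1) assms(3)] step(2) Src_h
    by simp
  finally have "sigma C a (Cmp C b (Cmp C h' k)) = Some (Cmp C h k)"
    using sigma_Cmp[OF ab(1) Cmp_in_Mor[OF step(1) assms(3) Src_h]]
      Rng_Cmp[OF step(1) assms(3) Src_h] step(2) by simp
  moreover have "Cmp C h' k \<in> Mor C" "Rng C (Cmp C h' k) = Src C b"
    using Cmp_in_Mor[OF h'(2) assms(3) Src_h'] Rng_Cmp[OF h'(2) assms(3) Src_h'] h'(3) by simp_all
  ultimately show ?case
    using Cons.IH[OF _ h'(1)] Cons.prems(1) unfolding p zmap_Cons_eq_Some by auto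
qed

lemma self_in_right_ideal: "h \<in> Mor C \<Longrightarrow> h \<in> right_ideal C h"
  unfolding right_ideal_def using Src_in_Mor Rng_Src Cmp_Src_right by force

lemma Adom_eq_right_ideal:
  assumes h: "h \<in> Mor C"
  shows "Adom C [(h, Rng C h)] = right_ideal C h"
proof -
  have Adom_iff: "g \<in> Adom C [(h, Rng C h)] \<longleftrightarrow>
      (\<exists>k. g \<in> Mor C \<and> Rng C g = Rng C h \<and> sigma C h g = Some k)" for g
    unfolding Adom_def using zmap_Cons_eq_Some[of C h "Rng C h" "[]" g] Src_Rng[OF h] Cmp_Rng_left[of g]
    by auto
  show ?thesis
  proof (intro equalityI subsetI)
    fix g assume "g \<in> Adom C [(h, Rng C h)]"
    then obtain k where "sigma C h g = Some k" using Adom_iff by blast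
    then show "g \<in> right_ideal C h"
      using sigma_SomeD[OF h] unfolding right_ideal_def by blast
  next
    fix g assume "g \<in> right_ideal C h"
    then obtain k where k: "k \<in> Mor C" "Rng C k = Src C h" "g = Cmp C h k"
      unfolding right_ideal_def by blast
    then show "g \<in> Adom C [(h, Rng C h)]"
      using Adom_iff sigma_Cmp[OF h k(1,2)] Cmp_in_Mor[OF h k(1)] Rng_Cmp[OF h k(1)] by simp
  qed
qed

lemma right_ideal_in_Aring:
  assumes h: "h \<in> Mor C"
  shows "right_ideal C h \<in> Aring C (Rng C h)"
proof -
  have "is_zigzag C [(h, Rng C h)]"
    using h Rng_in_Mor[OF h] Rng_Rng[OF h] unfolding is_zigzag_def by simp
  moreover have "zsrc C [(h, Rng C h)] = Rng C h"
    unfolding zsrc_def using Src_Rng[OF h] by simp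
  moreover have "Adom C [(h, Rng C h)] \<noteq> {}"
    using Adom_eq_right_ideal[OF h] self_in_right_ideal[OF h] by auto
  ultimately have "Adom C [(h, Rng C h)] \<in> D0 C (Rng C h)"
    unfolding D0_def by blast
  then show ?thesis unfolding Aring_def Adom_eq_right_ideal[OF h] by (rule gr_base)
qed

lemma zimage_right_ideal:
  assumes "set z \<subseteq> Mor C \<times> Mor C" "zmap C z g = Some h"
  shows "zimage C z (right_ideal C g) \<subseteq> right_ideal C h"
  using zmap_Cmp_right[OF assms] zmap_Src[OF assms]
  unfolding zimage_def right_ideal_def by fastforce

lemma right_ideal_antisym:
  assumes NI: "no_nontrivial_invertibles C"
    and h: "h \<in> Mor C" "h' \<in> Mor C"
    and "h' \<in> right_ideal C h" "h \<in> right_ideal C h'"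
  shows "h = h'"
proof -
  obtain k where k: "k \<in> Mor C" "Rng C k = Src C h" "Cmp C h k = h'"
    using assms(4) unfolding right_ideal_def by blast
  obtain k' where k': "k' \<in> Mor C" "Rng C k' = Src C h'" "Cmp C h' k' = h"
    using assms(5) unfolding right_ideal_def by blast
  have Src_k: "Src C k = Rng C k'" using Src_Cmp[OF h(1) k(1)] k k' by simp
  have Src_k': "Src C k' = Rng C k" using Src_Cmp[OF h(2) k'(1)] k k' by simp
  have "Cmp C k k' = Src C h"
  proof (rule Cmp_cancel_left[OF h(1) Cmp_in_Mor[OF k(1) k'(1) Src_k] Src_in_Mor[OF h(1)]])
    show "Cmp C h (Cmp C k k') = Cmp C h (Src C h)"
      using Cmp_assoc[OF h(1) k(1) k'(1)] k k' Src_k Cmp_Src_right[OF h(1)] by simp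
  qed (use Rng_Cmp[OF k(1) k'(1) Src_k] k(2) Rng_Src[OF h(1)] in simp_all)
  moreover have "Cmp C k' k = Src C h'"
  proof (rule Cmp_cancel_left[OF h(2) Cmp_in_Mor[OF k'(1) k(1) Src_k'] Src_in_Mor[OF h(2)]])
    show "Cmp C h' (Cmp C k' k) = Cmp C h' (Src C h')"
      using Cmp_assoc[OF h(2) k'(1) k(1)] k k' Src_k' Cmp_Src_right[OF h(2)] by simp
  qed (use Rng_Cmp[OF k'(1) k(1) Src_k'] k'(2) Rng_Src[OF h(2)] in simp_all)
  ultimately have "invertible_mor C k"
    unfolding invertible_mor_def
    using k(1,2) k'(1) Src_k Src_k' Src_Cmp[OF h(1) k(1)] k(3) by (intro conjI bexI[of _ k']) simp_all
  then have "k = Src C h"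
    using NI k(2) Rng_Src[OF k(1)] unfolding no_nontrivial_invertibles_def Obj_def by force
  then show ?thesis using k(3) Cmp_Src_right[OF h(1)] by simp
qed

lemma image_filter_principal_filter:
  assumes z: "is_zigzag C z" and g: "zmap C z g = Some h"
  shows "right_ideal C h \<in> image_filter C z (principal_filter C (zsrc C z) g)"
    and "F \<in> image_filter C z (principal_filter C (zsrc C z) g) \<Longrightarrow> h \<in> F"
proof -
  note gh = zigzag_zmap_SomeD[OF z g]
  have "right_ideal C g \<in> principal_filter C (zsrc C z) g"
    using right_ideal_in_Aring[OF gh(1)] self_in_right_ideal[OF gh(1)] gh(4)
    unfolding principal_filter_def by simp
  then show "right_ideal C h \<in> image_filter C z (principal_filter C (zsrc C z) g)"
    using right_ideal_in_Aring[OF gh(2)] zimage_right_ideal[OF zigzag_Mor[OF z] g] gh(3)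
    unfolding image_filter_def by auto
  show "h \<in> F" if "F \<in> image_filter C z (principal_filter C (zsrc C z) g)"
    using that g unfolding image_filter_def principal_filter_def zimage_def by blast
qed

lemma right_ideal_if_Phi_eq_at_principal_filter:
  assumes z: "is_zigzag C z" "is_zigzag C z'" "zsrc C z = v" "zsrc C z' = v" "v \<in> Obj C"
    and g: "zmap C z g = Some h" "zmap C z' g = Some h'"
    and Phi: "Phi C z (v, principal_filter C v g) = Phi C z' (v, principal_filter C v g)"
  shows "h' \<in> right_ideal C h"
proof -
  have "g \<in> Adom C z" "g \<in> Adom C z'" using g unfolding Adom_def by auto
  then have "image_filter C z (principal_filter C v g) = image_filter C z' (principal_filter C v g)"
    using Phi Phi_eq_Some[OF principal_filter_in_hatE_Adom[OF z(1,3,5)]]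
      Phi_eq_Some[OF principal_filter_in_hatE_Adom[OF z(2,4,5)]] by simp
  then show ?thesis
    using image_filter_principal_filter[OF z(1) g(1)] image_filter_principal_filter(2)[OF z(2) g(2)] z(3,4) by simp
qed

lemma sim1_imp_sim2:
  assumes NI: "no_nontrivial_invertibles C"
    and p: "(z, (v, U)) \<in> ZX C" and q: "(z', (v, U)) \<in> ZX C"
    and sim: "sim1 C (z, (v, U)) (z', (v, U))"
  shows "sim2 C (z, (v, U)) (z', (v, U))"
proof -
  note P = ZX_D[OF p] and Q = ZX_D[OF q]
  obtain E where E: "E \<in> U" and Phi: "\<forall>y\<in>hatE C v E. Phi C z y = Phi C z' y"
    using sim unfolding sim1_def by auto
  let ?E = "E \<inter> Adom C z \<inter> Adom C z'"
  have "\<forall>g\<in>?E. zmap C z g = zmap C z' g"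
  proof
    fix g assume g: "g \<in> ?E"
    obtain h h' where h: "zmap C z g = Some h" "zmap C z' g = Some h'"
      using g unfolding Adom_def by auto
    have "(v, principal_filter C v g) \<in> hatE C v E"
      using principal_filter_in_hatE[OF P(2) _] is_filter_inD(1)[OF P(3)] E g by blast
    then have "Phi C z (v, principal_filter C v g) = Phi C z' (v, principal_filter C v g)"
      using Phi by blast
    then have "h' \<in> right_ideal C h" "h \<in> right_ideal C h'"
      using right_ideal_if_Phi_eq_at_principal_filter[OF P(1) Q(1) P(4) Q(4) P(2) h]
        right_ideal_if_Phi_eq_at_principal_filter[OF Q(1) P(1) Q(4) P(4) P(2) h(2,1)] by simp_all
    then have "h = h'"
      using right_ideal_antisym[OF NI zigzag_zmap_SomeD(2)[OF P(1) h(1)]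
          zigzag_zmap_SomeD(2)[OF Q(1) h(2)]] by blast
    then show "zmap C z g = zmap C z' g" using h by simp
  qed
  moreover have "?E \<in> U" using is_filter_inD(3)[OF P(3)] P(5) Q(5) E by blast
  ultimately show ?thesis unfolding sim2_def by auto
qed

lemma sim2_imp_sim1:
  assumes p: "(z, (v, U)) \<in> ZX C" and q: "(z', (v, U)) \<in> ZX C"
    and sim: "sim2 C (z, (v, U)) (z', (v, U))"
  shows "sim1 C (z, (v, U)) (z', (v, U))"
proof -
  note P = ZX_D[OF p] and Q = ZX_D[OF q]
  obtain E where E: "E \<in> U" and eq: "\<forall>g\<in>E. zmap C z g = zmap C z' g"
    using sim unfolding sim2_def by auto
  let ?E = "E \<inter> Adom C z"
  have E_in: "?E \<in> U" using is_filter_inD(3)[OF P(3) E P(5)] .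
  then obtain g where g: "g \<in> ?E" using is_filter_inD(2)[OF P(3)] by (metis ex_in_conv)
  then obtain h where h: "zmap C z g = Some h" "zmap C z' g = Some h"
    using eq unfolding Adom_def by auto
  have rng: "zrng C z = zrng C z'"
    using zigzag_zmap_SomeD(3)[OF P(1) h(1)] zigzag_zmap_SomeD(3)[OF Q(1) h(2)] by simp
  have E_sub: "?E \<subseteq> Adom C z'" using eq unfolding Adom_def by auto
  have "\<forall>y\<in>hatE C v ?E. Phi C z y = Phi C z' y"
  proof
    fix y assume y: "y \<in> hatE C v ?E"
    obtain U' where yU': "y = (v, U')" and U': "is_filter_in (Aring C v) U'" "?E \<in> U'"
      using y unfolding hatE_def Xsp_def is_ultrafilter_in_def by auto
    have "Adom C z \<in> Aring C v" "Adom C z' \<in> Aring C v"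
      using is_filter_inD(1)[OF P(3)] P(5) Q(5) by auto
    then have "Adom C z \<in> U'" "Adom C z' \<in> U'"
      using is_filter_inD(4)[OF U'(1,2)] E_sub by auto
    then have y_dom: "y \<in> hatE C (zsrc C z) (Adom C z)" "y \<in> hatE C (zsrc C z') (Adom C z')"
      using y yU' P(4) Q(4) unfolding hatE_def by auto
    have "image_filter C z U' = image_filter C z' U'"
      by (rule image_filter_cong[OF U' _ rng]) (use eq in simp)
    then show "Phi C z y = Phi C z' y"
      using Phi_eq_Some[OF y_dom(1)] Phi_eq_Some[OF y_dom(2)] rng yU' by simp
  qed
  then show ?thesis using E_in unfolding sim1_def by auto
qed

end

theorem mainTheorem3:
  fixes C :: "'a cat"
  assumes "LCSC C"
    and "no_nontrivial_invertibles C"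
  shows "(\<forall>p\<in>ZX C. \<forall>q\<in>ZX C. sim1 C p q \<longleftrightarrow> sim2 C p q) \<and> G1 C = G2 C"
proof -
  interpret lc_category C using assms(1) unfolding LCSC_def by unfold_locales auto
  have sim_iff: "sim1 C p q \<longleftrightarrow> sim2 C p q" if "p \<in> ZX C" "q \<in> ZX C" for p q
  proof (cases "snd p = snd q")
    case True
    then show ?thesis
      using that sim1_imp_sim2[OF assms(2)] sim2_imp_sim1 by (metis prod.collapse)
  qed (simp add: sim1_def sim2_def)
  then have "rel_on (ZX C) (sim1 C) = rel_on (ZX C) (sim2 C)"
    unfolding rel_on_def by auto
  then show ?thesis using sim_iff unfolding G1_def G2_def by auto
qed

end
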